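(* Let $V\subset\mathbb{R}^n$ be a singular irreducible central real algebraic variety with coordinate ring $A=\mathbb{R}[V]$, and let $B$ be an $A$-algebra which is a subring of the ring of continuous semi-algebraic functions on $V$ (containing the polynomial functions). Assume $B$ has the Łojasiewicz property: for any $f,g\in B$ with $\mathcal{Z}(f)\subset\mathcal{Z}(g)$ there exist $h\in B$ and an integer $N$ with $g^N=fh$. Then $B$ has the weak substitution property over points: every ring homomorphism $A\to\mathbb{R}$ admits one and only one extension to a ring homomorphism $B\to\mathbb{R}$.
   Context: $V$ is central if its non-singular points are dense in $V$ for the Euclidean topology. $\mathcal{Z}(f)$ denotes the zero set of $f$ in $V$. *)

theory Defs
  imports "HOL-Analysis.Analysis"
begin

inductive polyfun :: "('a::euclidean_space \<Rightarrow> real) \<Rightarrow> bool" where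
  const: "polyfun (\<lambda>x. c)"
| coord: "b \<in> Basis \<Longrightarrow> polyfun (\<lambda>x. x \<bullet> b)"
| add: "polyfun p \<Longrightarrow> polyfun q \<Longrightarrow> polyfun (\<lambda>x. p x + q x)"
| mult: "polyfun p \<Longrightarrow> polyfun q \<Longrightarrow> polyfun (\<lambda>x. p x * q x)"

definition alg_set :: "'a::euclidean_space set \<Rightarrow> bool" where
  "alg_set V \<longleftrightarrow> (\<exists>P. finite P \<and> (\<forall>p\<in>P. polyfun p) \<and> V = {x. \<forall>p\<in>P. p x = 0})"

definition irreducible_alg :: "'a::euclidean_space set \<Rightarrow> bool" where
  "irreducible_alg V \<longleftrightarrow> alg_set V \<and> V \<noteq> {} \<and>
     (\<forall>W1 W2. alg_set W1 \<and> alg_set W2 \<and> V = W1 \<union> W2 \<longrightarrow> V = W1 \<or> V = W2)"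

inductive semialg :: "'a::euclidean_space set \<Rightarrow> bool" where
  basic: "polyfun p \<Longrightarrow> semialg {x. 0 < p x}"
| compl: "semialg S \<Longrightarrow> semialg (- S)"
| union: "semialg S \<Longrightarrow> semialg T \<Longrightarrow> semialg (S \<union> T)"

text \<open>Functions on V are represented by functions on the ambient space
that vanish outside V.\<close>
definition restr :: "'a set \<Rightarrow> ('a \<Rightarrow> real) \<Rightarrow> 'a \<Rightarrow> real" where
  "restr V f = (\<lambda>x. if x \<in> V then f x else 0)"

definition unit_on :: "'a set \<Rightarrow> 'a \<Rightarrow> real" where
  "unit_on V = restr V (\<lambda>_. 1)"

definition coord_ring :: "'a::euclidean_space set \<Rightarrow> ('a \<Rightarrow> real) set" where
  "coord_ring V = {restr V p | p. polyfun p}"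

definition cont_semialg_funs :: "'a::euclidean_space set \<Rightarrow> ('a \<Rightarrow> real) set" where
  "cont_semialg_funs V =
     {restr V f | f. continuous_on V f \<and> semialg {(x, f x) | x. x \<in> V}}"

definition zero_set :: "'a set \<Rightarrow> ('a \<Rightarrow> real) \<Rightarrow> 'a set" where
  "zero_set V f = {x \<in> V. f x = 0}"

definition prime_ideal_in :: "('a \<Rightarrow> real) set \<Rightarrow> ('a \<Rightarrow> real) \<Rightarrow> ('a \<Rightarrow> real) set \<Rightarrow> bool" where
  "prime_ideal_in R u I \<longleftrightarrow> I \<subseteq> R \<and> (\<lambda>_. 0) \<in> I \<and>
     (\<forall>a\<in>I. \<forall>b\<in>I. (\<lambda>x. a x + b x) \<in> I) \<and>
     (\<forall>a\<in>I. \<forall>r\<in>R. (\<lambda>x. r x * a x) \<in> I) \<and>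
     u \<notin> I \<and>
     (\<forall>a\<in>R. \<forall>b\<in>R. (\<lambda>x. a x * b x) \<in> I \<longrightarrow> a \<in> I \<or> b \<in> I)"

definition krull_dim :: "('a \<Rightarrow> real) set \<Rightarrow> ('a \<Rightarrow> real) \<Rightarrow> nat" where
  "krull_dim R u = Sup {d. \<exists>c :: nat \<Rightarrow> ('a \<Rightarrow> real) set.
       (\<forall>i\<le>d. prime_ideal_in R u (c i)) \<and> (\<forall>i<d. c i \<subset> c (Suc i))}"

definition alg_dim :: "'a::euclidean_space set \<Rightarrow> nat" where
  "alg_dim V = krull_dim (coord_ring V) (unit_on V)"

definition grad :: "('a::euclidean_space \<Rightarrow> real) \<Rightarrow> 'a \<Rightarrow> 'a" where
  "grad p x = (\<Sum>b\<in>Basis. frechet_derivative p (at x) b *\<^sub>R b)"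

text \<open>Non-singular point of V (in dimension dim V), via the Jacobian criterion:
the gradients at x of the polynomials vanishing on V span a space of dimension
n - dim V.\<close>
definition nonsingular_pt :: "'a::euclidean_space set \<Rightarrow> 'a \<Rightarrow> bool" where
  "nonsingular_pt V x \<longleftrightarrow> x \<in> V \<and>
     dim {grad p x | p. polyfun p \<and> (\<forall>y\<in>V. p y = 0)} = DIM('a) - alg_dim V"

definition central :: "'a::euclidean_space set \<Rightarrow> bool" where
  "central V \<longleftrightarrow> V \<subseteq> closure {x. nonsingular_pt V x}"

definition singular_var :: "'a::euclidean_space set \<Rightarrow> bool" where
  "singular_var V \<longleftrightarrow> (\<exists>x\<in>V. \<not> nonsingular_pt V x)"

definition csa_subalgebra :: "'a::euclidean_space set \<Rightarrow> ('a \<Rightarrow> real) set \<Rightarrow> bool" where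
  "csa_subalgebra V B \<longleftrightarrow> coord_ring V \<subseteq> B \<and> B \<subseteq> cont_semialg_funs V \<and>
     (\<forall>f\<in>B. \<forall>g\<in>B. (\<lambda>x. f x + g x) \<in> B \<and> (\<lambda>x. f x * g x) \<in> B \<and> (\<lambda>x. - f x) \<in> B)"

definition lojasiewicz_prop :: "'a set \<Rightarrow> ('a \<Rightarrow> real) set \<Rightarrow> bool" where
  "lojasiewicz_prop V B \<longleftrightarrow> (\<forall>f\<in>B. \<forall>g\<in>B. zero_set V f \<subseteq> zero_set V g \<longrightarrow>
     (\<exists>h\<in>B. \<exists>N::nat. \<forall>x\<in>V. g x ^ N = f x * h x))"

definition ring_hom_to_real :: "('a \<Rightarrow> real) set \<Rightarrow> ('a \<Rightarrow> real) \<Rightarrow> (('a \<Rightarrow> real) \<Rightarrow> real) \<Rightarrow> bool" where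
  "ring_hom_to_real R u \<phi> \<longleftrightarrow>
     (\<forall>f\<in>R. \<forall>g\<in>R. \<phi> (\<lambda>x. f x + g x) = \<phi> f + \<phi> g \<and> \<phi> (\<lambda>x. f x * g x) = \<phi> f * \<phi> g) \<and>
     \<phi> u = 1"

definition weak_subst_points :: "'a::euclidean_space set \<Rightarrow> ('a \<Rightarrow> real) set \<Rightarrow> bool" where
  "weak_subst_points V B \<longleftrightarrow>
     (\<forall>\<phi>. ring_hom_to_real (coord_ring V) (unit_on V) \<phi> \<longrightarrow>
        (\<exists>\<psi>. ring_hom_to_real B (unit_on V) \<psi> \<and> (\<forall>f\<in>coord_ring V. \<psi> f = \<phi> f)) \<and>
        (\<forall>\<psi>1 \<psi>2. ring_hom_to_real B (unit_on V) \<psi>1 \<and> (\<forall>f\<in>coord_ring V. \<psi>1 f = \<phi> f) \<and>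
                  ring_hom_to_real B (unit_on V) \<psi>2 \<and> (\<forall>f\<in>coord_ring V. \<psi>2 f = \<phi> f)
                  \<longrightarrow> (\<forall>f\<in>B. \<psi>1 f = \<psi>2 f)))"

end

theory Submission
  imports Defs
begin

text \<open>A ring homomorphism \<open>\<phi> : \<real>[V] \<rightarrow> \<real>\<close> is evaluation at the point \<open>a\<close> whose coordinates
  are the values of \<open>\<phi>\<close> on the coordinate functions: this uses that the identity is the only
  ring endomorphism of \<open>\<real>\<close>, and \<open>a \<in> V\<close> because \<open>\<phi>\<close> kills the equations of \<open>V\<close>.
  Evaluation at \<open>a\<close> is then an extension to \<open>B\<close>. For uniqueness, let \<open>\<psi>\<close> be any extension and
  \<open>f \<in> B\<close>; put \<open>g = f - f(a)\<close> and \<open>h = |x - a|\<^sup>2\<close>. The zero set of \<open>h\<close> is \<open>{a}\<close>, so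
  Lojasiewicz gives \<open>g\<^sup>N = h k\<close> with \<open>N > 0\<close>, whence \<open>\<psi>(g)\<^sup>N = \<psi>(h) \<psi>(k) = h(a) \<psi>(k) = 0\<close>
  and \<open>\<psi>(f) = f(a)\<close>.\<close>

lemma real_ring_endomorphism_Rats:
  fixes s :: "real \<Rightarrow> real"
  assumes add: "\<And>x y. s (x + y) = s x + s y" and mult: "\<And>x y. s (x * y) = s x * s y"
    and one: "s 1 = 1" and "q \<in> \<rat>"
  shows "s q = q"
proof -
  have s_0: "s 0 = 0" using add[of 0 0] by simp
  have s_neg: "s (- x) = - s x" for x
    using add[of x "- x"] s_0 by simp
  have s_of_nat: "s (of_nat n) = of_nat n" for n
    by (induction n) (use add one s_0 in simp_all)
  have s_of_int: "s (of_int z) = of_int z" for z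
    by (cases z rule: int_cases2) (simp_all add: s_of_nat s_neg)
  obtain m n where n: "n > 0" and q: "q = of_int m / of_int n"
    using \<open>q \<in> \<rat>\<close> by (rule Rats_cases')
  have "s q * of_int n = s (q * of_int n)" using mult s_of_int by metis
  also have "\<dots> = q * of_int n" using n q s_of_int by simp
  finally show ?thesis using n by simp
qed

lemma real_ring_endomorphism_mono:
  fixes s :: "real \<Rightarrow> real"
  assumes add: "\<And>x y. s (x + y) = s x + s y" and mult: "\<And>x y. s (x * y) = s x * s y"
    and "x \<le> y"
  shows "s x \<le> s y"
proof -
  have "sqrt (y - x) * sqrt (y - x) = y - x" using \<open>x \<le> y\<close> by simp
  then have "s (y - x) = s (sqrt (y - x)) * s (sqrt (y - x))" using mult by metis
  then have "0 \<le> s (y - x)" by simp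
  then show ?thesis using add[of x "y - x"] by simp
qed

lemma real_ring_endomorphism_eq_id:
  fixes s :: "real \<Rightarrow> real"
  assumes add: "\<And>x y. s (x + y) = s x + s y" and mult: "\<And>x y. s (x * y) = s x * s y"
    and one: "s 1 = 1"
  shows "s c = c"
proof (rule ccontr)
  note fix_Rats = real_ring_endomorphism_Rats[OF add mult one]
  note mono = real_ring_endomorphism_mono[OF add mult]
  assume "s c \<noteq> c"
  then consider "s c < c" | "c < s c" by linarith
  then show False
  proof cases
    case 1
    then obtain q where "q \<in> \<rat>" "s c < q" "q < c" using Rats_dense_in_real by blast
    then show False using mono[of q c] fix_Rats by force
  next
    case 2
    then obtain q where "q \<in> \<rat>" "c < q" "q < s c" using Rats_dense_in_real by blast
    then show False using mono[of c q] fix_Rats by force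
  qed
qed

lemma polyfun_diff: "polyfun p \<Longrightarrow> polyfun q \<Longrightarrow> polyfun (\<lambda>x. p x - q x)"
  using polyfun.add[of p "\<lambda>x. (- 1) * q x"] polyfun.mult[OF polyfun.const, of q "- 1"] by simp

lemma polyfun_sum:
  "finite S \<Longrightarrow> (\<And>b. b \<in> S \<Longrightarrow> polyfun (f b)) \<Longrightarrow> polyfun (\<lambda>x. \<Sum>b\<in>S. f b x)"
  by (induction S rule: finite_induct) (simp_all add: polyfun.const polyfun.add)

lemma polyfun_dist_sq: "polyfun (\<lambda>x. (dist x a)\<^sup>2)"
proof -
  have "(dist x a)\<^sup>2 = (\<Sum>b\<in>Basis. (x \<bullet> b - a \<bullet> b) * (x \<bullet> b - a \<bullet> b))" for x
    unfolding dist_norm power2_norm_eq_inner by (subst euclidean_inner) (simp add: inner_diff_left)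
  moreover have "polyfun (\<lambda>x. \<Sum>b\<in>Basis. (x \<bullet> b - a \<bullet> b) * (x \<bullet> b - a \<bullet> b))"
    by (intro polyfun_sum polyfun.mult polyfun_diff polyfun.coord polyfun.const) auto
  ultimately show ?thesis by simp
qed

lemma restr_add: "(\<lambda>x. restr V p x + restr V q x) = restr V (\<lambda>x. p x + q x)"
  by (auto simp: restr_def)

lemma restr_mult: "(\<lambda>x. restr V p x * restr V q x) = restr V (\<lambda>x. p x * q x)"
  by (auto simp: restr_def)

lemma restr_in_coord_ring: "polyfun p \<Longrightarrow> restr V p \<in> coord_ring V"
  by (auto simp: coord_ring_def)

lemma cont_semialg_funs_vanish: "f \<in> cont_semialg_funs V \<Longrightarrow> x \<notin> V \<Longrightarrow> f x = 0"
  by (auto simp: cont_semialg_funs_def restr_def)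

lemma ring_hom_to_real_add:
  "ring_hom_to_real R u \<phi> \<Longrightarrow> f \<in> R \<Longrightarrow> g \<in> R \<Longrightarrow> \<phi> (\<lambda>x. f x + g x) = \<phi> f + \<phi> g"
  by (simp add: ring_hom_to_real_def)

lemma ring_hom_to_real_mult:
  "ring_hom_to_real R u \<phi> \<Longrightarrow> f \<in> R \<Longrightarrow> g \<in> R \<Longrightarrow> \<phi> (\<lambda>x. f x * g x) = \<phi> f * \<phi> g"
  by (simp add: ring_hom_to_real_def)

text \<open>Only positive exponents: \<open>g\<^sup>0\<close> is the constant \<open>1\<close>, which need not lie in \<open>R\<close>
  (the unit of a ring of functions on \<open>V\<close> vanishes off \<open>V\<close>).\<close>

lemma ring_hom_to_real_power:
  assumes hom: "ring_hom_to_real R u \<psi>"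
    and mult_closed: "\<And>f g. f \<in> R \<Longrightarrow> g \<in> R \<Longrightarrow> (\<lambda>x. f x * g x) \<in> R"
    and "g \<in> R"
  shows "(\<lambda>x. g x ^ Suc m) \<in> R \<and> \<psi> (\<lambda>x. g x ^ Suc m) = \<psi> g ^ Suc m"
proof (induction m)
  case 0
  then show ?case using \<open>g \<in> R\<close> by simp
next
  case (Suc m)
  then have "(\<lambda>x. g x * g x ^ Suc m) \<in> R \<and> \<psi> (\<lambda>x. g x * g x ^ Suc m) = \<psi> g * \<psi> g ^ Suc m"
    using mult_closed ring_hom_to_real_mult[OF hom \<open>g \<in> R\<close>] \<open>g \<in> R\<close> by simp
  then show ?case by simp
qed

definition hom_point :: "'a::euclidean_space set \<Rightarrow> (('a \<Rightarrow> real) \<Rightarrow> real) \<Rightarrow> 'a" where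
  "hom_point V \<phi> = (\<Sum>b\<in>Basis. \<phi> (restr V (\<lambda>x. x \<bullet> b)) *\<^sub>R b)"

lemma coord_ring_hom_const:
  assumes "ring_hom_to_real (coord_ring V) (unit_on V) \<phi>"
  shows "\<phi> (restr V (\<lambda>_. c)) = c"
proof (rule real_ring_endomorphism_eq_id)
  have const: "restr V (\<lambda>_. c) \<in> coord_ring V" for c
    by (intro restr_in_coord_ring polyfun.const)
  show "\<phi> (restr V (\<lambda>_. x + y)) = \<phi> (restr V (\<lambda>_. x)) + \<phi> (restr V (\<lambda>_. y))" for x y
    using ring_hom_to_real_add[OF assms const const] by (simp only: restr_add)
  show "\<phi> (restr V (\<lambda>_. x * y)) = \<phi> (restr V (\<lambda>_. x)) * \<phi> (restr V (\<lambda>_. y))" for x y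
    using ring_hom_to_real_mult[OF assms const const] by (simp only: restr_mult)
  show "\<phi> (restr V (\<lambda>_. 1)) = 1"
    using assms by (simp add: ring_hom_to_real_def unit_on_def)
qed

lemma coord_ring_hom_eq_eval:
  assumes hom: "ring_hom_to_real (coord_ring V) (unit_on V) \<phi>" and "polyfun p"
  shows "\<phi> (restr V p) = p (hom_point V \<phi>)"
  using \<open>polyfun p\<close>
proof (induction rule: polyfun.induct)
  case (const c)
  then show ?case using coord_ring_hom_const[OF hom] by simp
next
  case (coord b)
  then show ?case
    by (simp add: hom_point_def inner_sum_left inner_Basis if_distrib cong: if_cong)
next
  case (add p q)
  then show ?case
    using ring_hom_to_real_add[OF hom restr_in_coord_ring restr_in_coord_ring, of p q]
    by (simp add: restr_add)
next
  case (mult p q)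
  then show ?case
    using ring_hom_to_real_mult[OF hom restr_in_coord_ring restr_in_coord_ring, of p q]
    by (simp add: restr_mult)
qed

lemma hom_point_in_alg_set:
  assumes "alg_set V" and hom: "ring_hom_to_real (coord_ring V) (unit_on V) \<phi>"
  shows "hom_point V \<phi> \<in> V"
proof -
  obtain P where P: "\<forall>p\<in>P. polyfun p" "V = {x. \<forall>p\<in>P. p x = 0}"
    using assms(1) unfolding alg_set_def by blast
  have "p (hom_point V \<phi>) = 0" if "p \<in> P" for p
  proof -
    have "restr V p = restr V (\<lambda>_. 0)" using that P(2) by (auto simp: restr_def)
    then show ?thesis
      using coord_ring_hom_eq_eval[OF hom] coord_ring_hom_const[OF hom] P(1) that by metis
  qed
  then show ?thesis using P(2) by simp
qed

lemma eval_ring_hom_to_real: "a \<in> V \<Longrightarrow> ring_hom_to_real B (unit_on V) (\<lambda>f. f a)"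
  by (simp add: ring_hom_to_real_def unit_on_def restr_def)

lemma zero_set_dist_sq: "a \<in> V \<Longrightarrow> zero_set V (restr V (\<lambda>x. (dist x a)\<^sup>2)) = {a}"
  by (auto simp: zero_set_def restr_def)

lemma lojasiewicz_hom_eq_eval:
  assumes B: "csa_subalgebra V B" and loj: "lojasiewicz_prop V B"
    and hom: "ring_hom_to_real B (unit_on V) \<psi>" and "a \<in> V"
    and poly_eval: "\<And>p. polyfun p \<Longrightarrow> \<psi> (restr V p) = p a"
    and "f \<in> B"
  shows "\<psi> f = f a"
proof -
  have coord_B: "coord_ring V \<subseteq> B" and B_csa: "B \<subseteq> cont_semialg_funs V"
    and closed: "\<And>f g. f \<in> B \<Longrightarrow> g \<in> B \<Longrightarrow> (\<lambda>x. f x + g x) \<in> B \<and> (\<lambda>x. f x * g x) \<in> B"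
    using B unfolding csa_subalgebra_def by auto
  define c where "c = restr V (\<lambda>_. - f a)"
  define g where "g = (\<lambda>x. f x + c x)"
  define h where "h = restr V (\<lambda>x. (dist x a)\<^sup>2)"
  have c_B: "c \<in> B" and h_B: "h \<in> B"
    unfolding c_def h_def using coord_B polyfun.const polyfun_dist_sq restr_in_coord_ring by blast+
  have g_B: "g \<in> B" unfolding g_def using closed \<open>f \<in> B\<close> c_B by blast
  have psi_g: "\<psi> g = \<psi> f - f a"
    unfolding g_def using ring_hom_to_real_add[OF hom \<open>f \<in> B\<close> c_B] poly_eval[OF polyfun.const]
    by (simp add: c_def)
  have psi_h: "\<psi> h = 0" unfolding h_def using poly_eval[OF polyfun_dist_sq] by simp
  have "zero_set V h \<subseteq> zero_set V g"
    using \<open>a \<in> V\<close> zero_set_dist_sq[OF \<open>a \<in> V\<close>]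
    by (simp add: h_def zero_set_def g_def c_def restr_def)
  then obtain k N where k_B: "k \<in> B" and k: "\<forall>x\<in>V. g x ^ N = h x * k x"
    using loj h_B g_B unfolding lojasiewicz_prop_def by blast
  obtain M where N: "N = Suc M"
    using k \<open>a \<in> V\<close> by (cases N) (auto simp: h_def restr_def)
  have "(\<lambda>x. g x ^ N) = (\<lambda>x. h x * k x)"
  proof
    fix x
    show "g x ^ N = h x * k x"
    proof (cases "x \<in> V")
      case False
      then have "g x = 0" "h x = 0"
        using cont_semialg_funs_vanish B_csa g_B h_B by blast+
      then show ?thesis using N by simp
    qed (use k in blast)
  qed
  then have "\<psi> g ^ N = \<psi> h * \<psi> k"
    using ring_hom_to_real_power[OF hom _ g_B, of M] ring_hom_to_real_mult[OF hom h_B k_B]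
      closed N by simp
  then have "\<psi> g = 0" using psi_h N by auto
  then show ?thesis using psi_g by simp
qed

theorem proposition4p1:
  fixes V :: "(real ^ 'n) set" and B :: "(real ^ 'n \<Rightarrow> real) set"
  assumes "irreducible_alg V" and "singular_var V" and "central V"
    and "csa_subalgebra V B"
    and "lojasiewicz_prop V B"
  shows "weak_subst_points V B"
  unfolding weak_subst_points_def
proof (intro allI impI conjI)
  fix \<phi>
  assume hom: "ring_hom_to_real (coord_ring V) (unit_on V) \<phi>"
  define a where "a = hom_point V \<phi>"
  have "a \<in> V"
    using assms(1) hom_point_in_alg_set[OF _ hom] by (simp add: a_def irreducible_alg_def)
  have agree_eval: "(\<forall>f\<in>coord_ring V. \<psi> f = \<phi> f) \<longleftrightarrow> (\<forall>p. polyfun p \<longrightarrow> \<psi> (restr V p) = p a)"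
    for \<psi> :: "(real ^ 'n \<Rightarrow> real) \<Rightarrow> real"
    using coord_ring_hom_eq_eval[OF hom] by (auto simp: a_def coord_ring_def)
  show "\<exists>\<psi>. ring_hom_to_real B (unit_on V) \<psi> \<and> (\<forall>f\<in>coord_ring V. \<psi> f = \<phi> f)"
  proof (intro exI conjI)
    show "ring_hom_to_real B (unit_on V) (\<lambda>f. f a)" using \<open>a \<in> V\<close> by (rule eval_ring_hom_to_real)
    show "\<forall>f\<in>coord_ring V. f a = \<phi> f" using agree_eval \<open>a \<in> V\<close> by (simp add: restr_def)
  qed
  show "\<forall>f\<in>B. \<psi>1 f = \<psi>2 f"
    if "ring_hom_to_real B (unit_on V) \<psi>1 \<and> (\<forall>f\<in>coord_ring V. \<psi>1 f = \<phi> f) \<and>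
        ring_hom_to_real B (unit_on V) \<psi>2 \<and> (\<forall>f\<in>coord_ring V. \<psi>2 f = \<phi> f)" for \<psi>1 \<psi>2
    using that lojasiewicz_hom_eq_eval[OF assms(4,5) _ \<open>a \<in> V\<close>] agree_eval by metis
qed

end
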